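(* Consider the hierarchical Gaussian $K$-armed bandit and the algorithm HierTS described in the context, and let $\sigma_{0,\max} = \max_{i \in \mathcal{V}} \sigma_{0,i}$. Then the inequality $c\, \hat{\sigma}_{t,i}^{-2} \geq \hat{\sigma}_{t+1,i}^{-2}$ holds for every node $i \in \mathcal{V}$ and every round $t$ with $c = 1 + \sigma_{0,\max}^2/\sigma^2$. Moreover, if $\sigma \geq \sigma_{0,\max}$, it holds with $c = 2$.
   Context: Tree and model. Let $\mathcal{T}$ be a rooted tree with node set $\mathcal{V}$, root labeled $1$, in which every internal node has at least $2$ children. For a node $i \neq 1$, $\mathsf{pa}(i)$ is its parent; $\mathsf{ch}(i)$ is the set of children of $i$. The leaves form the action set $\mathcal{A}$, $|\mathcal{A}| = K$. Node parameters $\theta_{*, i} \in \mathbb{R}$ are generated as $\theta_{*, 1} \sim \mathcal{N}(\mu_1, \sigma_{0,1}^2)$ and, for $i \neq 1$, $\theta_{*, i} \mid \theta_{*, \mathsf{pa}(i)} \sim \mathcal{N}(\theta_{*, \mathsf{pa}(i)}, \sigma_{0,i}^2)$, with known $\mu_1$ and $\sigma_{0,i} > 0$. In each round $t$ the agent takes $A_t \in \mathcal{A}$ and observes $Y_t \sim \mathcal{N}(\theta_{*, A_t}, \sigma^2)$ (independent noise, known $\sigma > 0$). The history is $H_t = (A_\ell, Y_\ell)_{\ell < t}$. HierTS samples $\Theta_t$ exactly from the posterior of $(\theta_{*,i})_{i \in \mathcal{V}}$ given $H_t$ and takes $A_t = \arg\max_{a \in \mathcal{A}} \theta_{t,a}$.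 Conditional posterior variances. For a node $i \neq 1$, $\hat{\sigma}_{t,i}^2$ is the variance of $\theta_{*, i}$ conditioned on $H_t$ and on $\theta_{*, \mathsf{pa}(i)}$ (it does not depend on the parent's value); for the root, $\hat{\sigma}_{t,1}^2 = \mathrm{Var}(\theta_{*,1} \mid H_t)$. Explicitly, with $\mathcal{S}_{t,a} = \{\ell < t : A_\ell = a\}$: for an action node $a$, $\hat{\sigma}_{t,a}^{-2} = \sigma_{0,a}^{-2} + |\mathcal{S}_{t,a}| \sigma^{-2}$; for a non-action node $i$, $\hat{\sigma}_{t,i}^{-2} = \sigma_{0,i}^{-2} + \sum_{j \in \mathsf{ch}(i)} \tilde{\sigma}_{t,j}^{-2}$, where recursively $\tilde{\sigma}_{t,j}^{2} = \sigma_{0,j}^2 + \sigma^2/|\mathcal{S}_{t,j}|$ for an action node $j$ (with $\tilde{\sigma}_{t,j}^{-2} = 0$ if $|\mathcal{S}_{t,j}| = 0$) and $\tilde{\sigma}_{t,j}^{2} = \sigma_{0,j}^2 + \big(\sum_{k \in \mathsf{ch}(j)} \tilde{\sigma}_{t,k}^{-2}\big)^{-1}$ for a non-action node $j$. *)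

theory Defs
  imports Complex_Main
begin

text \<open>Rooted trees whose nodes carry labels. Leaves are the actions.\<close>
datatype 'a htree = Leaf 'a | Node 'a "'a htree list"

fun label :: "'a htree \<Rightarrow> 'a" where
  "label (Leaf a) = a"
| "label (Node i ts) = i"

fun labels :: "'a htree \<Rightarrow> 'a list" where
  "labels (Leaf a) = [a]"
| "labels (Node i ts) = i # concat (map labels ts)"

fun leaf_labels :: "'a htree \<Rightarrow> 'a list" where
  "leaf_labels (Leaf a) = [a]"
| "leaf_labels (Node i ts) = concat (map leaf_labels ts)"

fun subtrees :: "'a htree \<Rightarrow> 'a htree list" where
  "subtrees (Leaf a) = [Leaf a]"
| "subtrees (Node i ts) = Node i ts # concat (map subtrees ts)"

fun branching :: "'a htree \<Rightarrow> bool" where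
  "branching (Leaf a) = True"
| "branching (Node i ts) = (length ts \<ge> 2 \<and> (\<forall>s\<in>set ts. branching s))"

definition wf_htree :: "'a htree \<Rightarrow> bool" where
  "wf_htree T \<longleftrightarrow> distinct (labels T) \<and> branching T"

definition nodes :: "'a htree \<Rightarrow> 'a set" where
  "nodes T = set (labels T)"

definition actions :: "'a htree \<Rightarrow> 'a set" where
  "actions T = set (leaf_labels T)"

text \<open>The subtree rooted at node i (well defined for distinct labels).\<close>
definition subtree_at :: "'a htree \<Rightarrow> 'a \<Rightarrow> 'a htree" where
  "subtree_at T i = (THE s. s \<in> set (subtrees T) \<and> label s = i)"

definition pulls :: "(nat \<Rightarrow> 'a) \<Rightarrow> nat \<Rightarrow> 'a \<Rightarrow> nat" where
  "pulls Act t a = card {l. l < t \<and> Act l = a}"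

text \<open>tilde sigma_{t,j}^{-2} for the subtree rooted at j (n = pull counts).
  Infinite variance (no data below j) is encoded as precision 0.\<close>
fun tilde_prec :: "('a \<Rightarrow> real) \<Rightarrow> real \<Rightarrow> ('a \<Rightarrow> nat) \<Rightarrow> 'a htree \<Rightarrow> real" where
  "tilde_prec s0 s n (Leaf a) =
     (if n a = 0 then 0 else 1 / ((s0 a)\<^sup>2 + s\<^sup>2 / real (n a)))"
| "tilde_prec s0 s n (Node j ts) =
     (let S = sum_list (map (tilde_prec s0 s n) ts) in
      if S = 0 then 0 else 1 / ((s0 j)\<^sup>2 + 1 / S))"

fun hat_prec :: "('a \<Rightarrow> real) \<Rightarrow> real \<Rightarrow> ('a \<Rightarrow> nat) \<Rightarrow> 'a htree \<Rightarrow> real" where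
  "hat_prec s0 s n (Leaf a) = 1 / (s0 a)\<^sup>2 + real (n a) / s\<^sup>2"
| "hat_prec s0 s n (Node i ts) = 1 / (s0 i)\<^sup>2 + sum_list (map (tilde_prec s0 s n) ts)"

definition post_prec :: "'a htree \<Rightarrow> ('a \<Rightarrow> real) \<Rightarrow> real \<Rightarrow> (nat \<Rightarrow> 'a) \<Rightarrow> nat \<Rightarrow> 'a \<Rightarrow> real" where
  "post_prec T s0 s Act t i = hat_prec s0 s (pulls Act t) (subtree_at T i)"

end

theory Submission
  imports Defs
begin

text \<open>
  A pull of leaf \<open>a\<close> raises the precision of \<open>a\<close> by exactly \<open>1 / \<sigma>\<^sup>2\<close>. Precisions pass to
  the parent through maps \<open>p \<mapsto> 1 / (v + 1 / p)\<close>, which are monotone and 1-Lipschitz on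
  \<open>p \<ge> 0\<close>, and are summed over the children. As labels are distinct, at most one leaf below a
  node \<open>i\<close> is pulled per round, so the posterior precision of \<open>i\<close> grows by at most
  \<open>1 / \<sigma>\<^sup>2\<close> per round. Since it is never below the prior precision \<open>1 / (\<sigma>0 i)\<^sup>2\<close>, this
  increment is at most \<open>(\<sigma>0 i)\<^sup>2 / \<sigma>\<^sup>2\<close> times the current precision.
\<close>

lemma distinct_concat_map_subset:
  assumes "distinct (concat (map f xs))"
    and "\<And>x. x \<in> set xs \<Longrightarrow> distinct (f x) \<Longrightarrow> distinct (g x)"
    and "\<And>x. x \<in> set xs \<Longrightarrow> set (g x) \<subseteq> set (f x)"
  shows "distinct (concat (map g xs))"
  using assms
proof (induction xs)
  case (Cons x xs)
  have "set (g x) \<subseteq> set (f x)" "set (concat (map g xs)) \<subseteq> set (concat (map f xs))"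
    using Cons.prems(3) by auto
  moreover have "set (f x) \<inter> set (concat (map f xs)) = {}" "distinct (g x)"
    using Cons.prems(1,2) by auto
  ultimately show ?case using Cons by simp blast
qed simp

lemma distinct_concat_map_overlap_eq:
  "distinct (concat (map f xs)) \<Longrightarrow> x \<in> set xs \<Longrightarrow> y \<in> set xs \<Longrightarrow>
   v \<in> set (f x) \<Longrightarrow> v \<in> set (f y) \<Longrightarrow> x = y"
  by (induction xs) auto

lemma sum_list_map_concat:
  "(\<Sum>x\<leftarrow>concat xss. f x) = (\<Sum>xs\<leftarrow>xss. \<Sum>x\<leftarrow>xs. f x)"
  by (induction xss) auto

lemma leaf_labels_subset_labels: "set (leaf_labels t) \<subseteq> set (labels t)"
  by (induction t) auto

lemma distinct_leaf_labels: "distinct (labels t) \<Longrightarrow> distinct (leaf_labels t)"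
proof (induction t)
  case (Node i ts)
  have "distinct (concat (map labels ts))" using Node.prems by simp
  then have "distinct (concat (map leaf_labels ts))"
    using Node.IH leaf_labels_subset_labels by (rule distinct_concat_map_subset)
  then show ?case by simp
qed simp

lemma distinct_labels_subtree:
  "s \<in> set (subtrees t) \<Longrightarrow> distinct (labels t) \<Longrightarrow> distinct (labels s)"
  by (induction t) (auto simp: distinct_concat_iff)

lemma label_in_labels: "label t \<in> set (labels t)"
  by (cases t) auto

lemma labels_subtree_subset:
  "s \<in> set (subtrees t) \<Longrightarrow> set (labels s) \<subseteq> set (labels t)"
  by (induction t) auto

lemma label_subtree_in_labels: "s \<in> set (subtrees t) \<Longrightarrow> label s \<in> set (labels t)"
  using labels_subtree_subset label_in_labels by blast

lemma subtree_label_unique: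
  assumes "distinct (labels t)" "s \<in> set (subtrees t)" "s' \<in> set (subtrees t)"
    and "label s = label s'"
  shows "s = s'"
  using assms
proof (induction t arbitrary: s s')
  case (Node i ts)
  have root_fresh: "i \<notin> set (labels c)" if "c \<in> set ts" for c
    using Node.prems(1) that by auto
  have children: "distinct (concat (map labels ts))" using Node.prems(1) by simp
  consider "s = Node i ts" "s' = Node i ts"
    | c where "c \<in> set ts" "s \<in> set (subtrees c)" "s' = Node i ts"
    | c' where "c' \<in> set ts" "s' \<in> set (subtrees c')" "s = Node i ts"
    | c c' where "c \<in> set ts" "s \<in> set (subtrees c)" "c' \<in> set ts" "s' \<in> set (subtrees c')"
    using Node.prems(2,3) by auto
  then show ?case
  proof cases
    case 1
    then show ?thesis by simp
  next
    case 2
    then show ?thesis using root_fresh label_subtree_in_labels Node.prems(4) by fastforce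
  next
    case 3
    then show ?thesis using root_fresh label_subtree_in_labels Node.prems(4) by fastforce
  next
    case (4 c c')
    then have "c = c'"
      using distinct_concat_map_overlap_eq[OF children] label_subtree_in_labels Node.prems(4)
      by metis
    moreover have "distinct (labels c)"
      using children \<open>c \<in> set ts\<close> by (simp add: distinct_concat_iff)
    ultimately show ?thesis using Node.IH 4 Node.prems(4) by blast
  qed
qed simp

lemma subtree_with_label_exists:
  "i \<in> set (labels t) \<Longrightarrow> \<exists>s\<in>set (subtrees t). label s = i"
  by (induction t) auto

lemma subtree_at_correct:
  assumes "distinct (labels t)" "i \<in> set (labels t)"
  shows "subtree_at t i \<in> set (subtrees t)" "label (subtree_at t i) = i"
proof -
  have "\<exists>!s. s \<in> set (subtrees t) \<and> label s = i"
    using subtree_with_label_exists[OF assms(2)] subtree_label_unique[OF assms(1)] by blast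
  from theI'[OF this] show "subtree_at t i \<in> set (subtrees t)" "label (subtree_at t i) = i"
    unfolding subtree_at_def by simp_all
qed

text \<open>The precision of \<open>X + Y\<close> for independent Gaussians \<open>X\<close> of precision \<open>p\<close> and \<open>Y\<close> of
  variance \<open>v\<close>. As in \<^const>\<open>tilde_prec\<close>, precision \<open>0\<close> stands for infinite variance.\<close>
definition prec_add_var :: "real \<Rightarrow> real \<Rightarrow> real" where
  "prec_add_var v p = (if p = 0 then 0 else 1 / (v + 1 / p))"

lemma prec_add_var_pos:
  assumes "v \<ge> 0" "p > 0"
  shows "prec_add_var v p = p / (1 + v * p)"
  using assms by (simp add: prec_add_var_def field_simps)

lemma prec_add_var_nonneg: "v \<ge> 0 \<Longrightarrow> p \<ge> 0 \<Longrightarrow> prec_add_var v p \<ge> 0"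
  by (simp add: prec_add_var_def)

lemma prec_add_var_le:
  assumes "v \<ge> 0" "p \<ge> 0"
  shows "prec_add_var v p \<le> p"
proof (cases "p = 0")
  case False
  have "0 \<le> v * p" using assms by simp
  have "p / (1 + v * p) \<le> p / 1"
    by (rule frac_le) (use assms \<open>0 \<le> v * p\<close> in auto)
  then show ?thesis using False assms by (simp add: prec_add_var_pos)
qed (simp add: prec_add_var_def)

lemma prec_add_var_diff:
  assumes "v \<ge> 0" "p > 0" "q > 0"
  shows "prec_add_var v q - prec_add_var v p = (q - p) / ((1 + v * p) * (1 + v * q))"
proof -
  have "1 + v * p > 0" "1 + v * q > 0" using assms by (simp_all add: add_pos_nonneg)
  then show ?thesis using assms by (simp add: prec_add_var_pos field_simps)
qed

lemma prec_add_var_mono: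
  assumes "v \<ge> 0" "0 \<le> p" "p \<le> q"
  shows "prec_add_var v p \<le> prec_add_var v q"
proof (cases "p = 0")
  case True
  then show ?thesis using assms prec_add_var_nonneg[of v q] by (simp add: prec_add_var_def)
next
  case False
  then have "0 \<le> (q - p) / ((1 + v * p) * (1 + v * q))"
    using assms by (simp add: add_nonneg_nonneg)
  then show ?thesis using prec_add_var_diff[of v p q] False assms by linarith
qed

lemma prec_add_var_diff_le:
  assumes "v \<ge> 0" "0 \<le> p" "p \<le> q"
  shows "prec_add_var v q - prec_add_var v p \<le> q - p"
proof (cases "p = 0")
  case True
  then show ?thesis using assms prec_add_var_le[of v q] by (simp add: prec_add_var_def)
next
  case False
  have "0 \<le> v * p" "0 \<le> v * q" using assms by simp_all
  have "(q - p) / ((1 + v * p) * (1 + v * q)) \<le> (q - p) / 1"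
    by (rule frac_le) (use assms \<open>0 \<le> v * p\<close> \<open>0 \<le> v * q\<close> in \<open>auto simp: algebra_simps\<close>)
  then show ?thesis using prec_add_var_diff[of v p q] False assms by simp
qed

lemma tilde_prec_Leaf:
  "s \<noteq> 0 \<Longrightarrow> tilde_prec s0 s n (Leaf a) = prec_add_var ((s0 a)\<^sup>2) (real (n a) / s\<^sup>2)"
  by (simp add: prec_add_var_def)

lemma tilde_prec_Node:
  "tilde_prec s0 s n (Node j ts) = prec_add_var ((s0 j)\<^sup>2) (\<Sum>c\<leftarrow>ts. tilde_prec s0 s n c)"
  by (simp add: prec_add_var_def Let_def)

declare tilde_prec.simps [simp del]

lemma tilde_prec_nonneg: "s \<noteq> 0 \<Longrightarrow> tilde_prec s0 s n t \<ge> 0"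
proof (induction t)
  case (Leaf a)
  then show ?case by (simp add: tilde_prec_Leaf prec_add_var_nonneg)
next
  case (Node j ts)
  have "0 \<le> (\<Sum>c\<leftarrow>ts. tilde_prec s0 s n c)" by (rule sum_list_nonneg) (use Node in auto)
  then show ?case by (simp add: tilde_prec_Node prec_add_var_nonneg)
qed

lemma sum_tilde_prec_nonneg: "s \<noteq> 0 \<Longrightarrow> 0 \<le> (\<Sum>c\<leftarrow>ts. tilde_prec s0 s n c)"
  by (rule sum_list_nonneg) (auto simp: tilde_prec_nonneg)

lemma tilde_prec_mono:
  assumes "s \<noteq> 0" "\<And>b. n b \<le> n' b"
  shows "tilde_prec s0 s n t \<le> tilde_prec s0 s n' t"
proof (induction t)
  case (Leaf a)
  then show ?case
    using assms by (simp add: tilde_prec_Leaf prec_add_var_mono divide_right_mono)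
next
  case (Node j ts)
  have "(\<Sum>c\<leftarrow>ts. tilde_prec s0 s n c) \<le> (\<Sum>c\<leftarrow>ts. tilde_prec s0 s n' c)"
    using Node.IH by (rule sum_list_mono)
  then show ?case
    unfolding tilde_prec_Node
    by (rule prec_add_var_mono[rotated 2]) (simp_all add: sum_tilde_prec_nonneg assms(1))
qed

lemma tilde_prec_increment_le:
  assumes "s \<noteq> 0" "\<And>b. n b \<le> n' b"
  shows "tilde_prec s0 s n' t - tilde_prec s0 s n t
    \<le> (\<Sum>b\<leftarrow>leaf_labels t. (real (n' b) - real (n b)) / s\<^sup>2)"
proof (induction t)
  case (Leaf a)
  have "real (n a) / s\<^sup>2 \<le> real (n' a) / s\<^sup>2"
    using assms by (simp add: divide_right_mono)
  then show ?case
    using prec_add_var_diff_le[of "(s0 a)\<^sup>2" "real (n a) / s\<^sup>2" "real (n' a) / s\<^sup>2"] assms(1)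
    by (simp add: tilde_prec_Leaf diff_divide_distrib)
next
  case (Node j ts)
  let ?S = "\<Sum>c\<leftarrow>ts. tilde_prec s0 s n c" and ?S' = "\<Sum>c\<leftarrow>ts. tilde_prec s0 s n' c"
  have "?S \<le> ?S'"
    by (rule sum_list_mono) (rule tilde_prec_mono[OF assms])
  then have "tilde_prec s0 s n' (Node j ts) - tilde_prec s0 s n (Node j ts) \<le> ?S' - ?S"
    unfolding tilde_prec_Node using sum_tilde_prec_nonneg[OF assms(1)]
    by (intro prec_add_var_diff_le) auto
  also have "\<dots> = (\<Sum>c\<leftarrow>ts. tilde_prec s0 s n' c - tilde_prec s0 s n c)"
    by (simp add: sum_list_subtractf)
  also have "\<dots> \<le> (\<Sum>c\<leftarrow>ts. \<Sum>b\<leftarrow>leaf_labels c. (real (n' b) - real (n b)) / s\<^sup>2)"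
    using Node.IH by (rule sum_list_mono)
  finally show ?case by (simp add: sum_list_map_concat o_def)
qed

lemma hat_prec_ge_prior: "s \<noteq> 0 \<Longrightarrow> 1 / (s0 (label t))\<^sup>2 \<le> hat_prec s0 s n t"
  by (cases t) (simp_all add: sum_tilde_prec_nonneg)

lemma hat_prec_increment_le:
  assumes "s \<noteq> 0" "\<And>b. n b \<le> n' b"
  shows "hat_prec s0 s n' t - hat_prec s0 s n t
    \<le> (\<Sum>b\<leftarrow>leaf_labels t. (real (n' b) - real (n b)) / s\<^sup>2)"
proof (cases t)
  case (Leaf a)
  then show ?thesis by (simp add: diff_divide_distrib)
next
  case (Node j ts)
  have "hat_prec s0 s n' t - hat_prec s0 s n t
      = (\<Sum>c\<leftarrow>ts. tilde_prec s0 s n' c - tilde_prec s0 s n c)"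
    using Node by (simp add: sum_list_subtractf)
  also have "\<dots> \<le> (\<Sum>c\<leftarrow>ts. \<Sum>b\<leftarrow>leaf_labels c. (real (n' b) - real (n b)) / s\<^sup>2)"
    by (rule sum_list_mono) (rule tilde_prec_increment_le[OF assms])
  finally show ?thesis using Node by (simp add: sum_list_map_concat o_def)
qed

lemma pulls_Suc: "pulls Act (Suc t) b = pulls Act t b + (if Act t = b then 1 else 0)"
proof -
  have "{l. l < Suc t \<and> Act l = b} = {l. l < t \<and> Act l = b} \<union> (if Act t = b then {t} else {})"
    by (auto simp: less_Suc_eq)
  then show ?thesis by (simp add: pulls_def)
qed

lemma post_prec_ge_prior:
  assumes "distinct (labels T)" "i \<in> nodes T" "\<sigma> \<noteq> 0"
  shows "1 / (\<sigma>0 i)\<^sup>2 \<le> post_prec T \<sigma>0 \<sigma> Act t i"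
proof -
  have "label (subtree_at T i) = i"
    using subtree_at_correct(2)[OF assms(1)] assms(2) by (simp add: nodes_def)
  then show ?thesis
    using hat_prec_ge_prior[OF assms(3), of \<sigma>0 "subtree_at T i"] by (simp add: post_prec_def)
qed

lemma post_prec_Suc_le_add:
  assumes "distinct (labels T)" "i \<in> nodes T" "\<sigma> \<noteq> 0"
  shows "post_prec T \<sigma>0 \<sigma> Act (Suc t) i \<le> post_prec T \<sigma>0 \<sigma> Act t i + 1 / \<sigma>\<^sup>2"
proof -
  define S where "S = subtree_at T i"
  have "distinct (leaf_labels S)"
    using subtree_at_correct[OF assms(1)] assms(2) distinct_labels_subtree[OF _ assms(1)]
    by (auto simp: S_def nodes_def intro: distinct_leaf_labels)
  have "post_prec T \<sigma>0 \<sigma> Act (Suc t) i - post_prec T \<sigma>0 \<sigma> Act t i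
      \<le> (\<Sum>b\<leftarrow>leaf_labels S. (real (pulls Act (Suc t) b) - real (pulls Act t b)) / \<sigma>\<^sup>2)"
    unfolding post_prec_def S_def[symmetric]
    by (rule hat_prec_increment_le[OF assms(3)]) (simp add: pulls_Suc)
  also have "\<dots> = (\<Sum>b\<in>set (leaf_labels S). if b = Act t then 1 / \<sigma>\<^sup>2 else 0)"
    unfolding sum_list_distinct_conv_sum_set[OF \<open>distinct (leaf_labels S)\<close>]
    by (rule sum.cong) (auto simp: pulls_Suc)
  also have "\<dots> \<le> 1 / \<sigma>\<^sup>2"
    by (simp add: sum.delta)
  finally show ?thesis by simp
qed

lemma post_prec_Suc_le_mult:
  assumes "distinct (labels T)" "i \<in> nodes T" "\<sigma> \<noteq> 0" "\<sigma>0 i \<noteq> 0"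
    and "(\<sigma>0 i)\<^sup>2 / \<sigma>\<^sup>2 \<le> c"
  shows "post_prec T \<sigma>0 \<sigma> Act (Suc t) i \<le> (1 + c) * post_prec T \<sigma>0 \<sigma> Act t i"
proof -
  have "0 \<le> (\<sigma>0 i)\<^sup>2 / \<sigma>\<^sup>2" by simp
  then have "0 \<le> c" using assms(5) by linarith
  have "1 / \<sigma>\<^sup>2 = (\<sigma>0 i)\<^sup>2 / \<sigma>\<^sup>2 * (1 / (\<sigma>0 i)\<^sup>2)"
    using assms(4) by simp
  also have "\<dots> \<le> c * post_prec T \<sigma>0 \<sigma> Act t i"
    using post_prec_ge_prior[OF assms(1-3)] assms(5) \<open>0 \<le> c\<close> by (intro mult_mono) auto
  finally show ?thesis
    using post_prec_Suc_le_add[OF assms(1-3), of \<sigma>0 Act t] by (simp add: algebra_simps)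
qed

theorem lemma4:
  fixes T :: "'a htree" and \<sigma>0 :: "'a \<Rightarrow> real" and \<sigma> :: real and Act :: "nat \<Rightarrow> 'a"
  assumes "wf_htree T"
    and "\<forall>i\<in>nodes T. \<sigma>0 i > 0"
    and "\<sigma> > 0"
    and "\<forall>l. Act l \<in> actions T"
  shows "(\<forall>t. \<forall>i\<in>nodes T.
            (1 + (Max (\<sigma>0 ` nodes T))\<^sup>2 / \<sigma>\<^sup>2) * post_prec T \<sigma>0 \<sigma> Act t i
              \<ge> post_prec T \<sigma>0 \<sigma> Act (Suc t) i)
       \<and> (\<sigma> \<ge> Max (\<sigma>0 ` nodes T) \<longrightarrow>
           (\<forall>t. \<forall>i\<in>nodes T.
              2 * post_prec T \<sigma>0 \<sigma> Act t i \<ge> post_prec T \<sigma>0 \<sigma> Act (Suc t) i))"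
proof -
  let ?M = "Max (\<sigma>0 ` nodes T)"
  have dist: "distinct (labels T)" using assms(1) by (simp add: wf_htree_def)
  have \<sigma>: "\<sigma> \<noteq> 0" using assms(3) by simp
  have node: "0 < \<sigma>0 i" "\<sigma>0 i \<le> ?M" if "i \<in> nodes T" for i
    using assms(2) that by (auto simp: nodes_def)
  show ?thesis
  proof (intro conjI impI allI ballI)
    fix t i assume i: "i \<in> nodes T"
    show "post_prec T \<sigma>0 \<sigma> Act (Suc t) i \<le> (1 + ?M\<^sup>2 / \<sigma>\<^sup>2) * post_prec T \<sigma>0 \<sigma> Act t i"
      using node[OF i] by (intro post_prec_Suc_le_mult[OF dist i \<sigma>] divide_right_mono power_mono) auto
  next
    fix t i assume "?M \<le> \<sigma>" and i: "i \<in> nodes T"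
    then have "(\<sigma>0 i)\<^sup>2 \<le> \<sigma>\<^sup>2"
      using node[OF i] by (intro power_mono) auto
    then have "(\<sigma>0 i)\<^sup>2 / \<sigma>\<^sup>2 \<le> 1"
      using \<sigma> by simp
    then show "post_prec T \<sigma>0 \<sigma> Act (Suc t) i \<le> 2 * post_prec T \<sigma>0 \<sigma> Act t i"
      using node[OF i] post_prec_Suc_le_mult[OF dist i \<sigma>, where c = 1] by simp
  qed
qed
end
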